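(* Let $H=(V,E)$ be an $n$-uniform hypergraph, $r\ge 2$, let $A\in E$ and let $2\le k\le r$. The number of sequences $(C_1,\dots,C_{k-1})$ of edges of $H$ for which there exist an injective $\sigma:V\to[0,1)$ and sets $V_i\subseteq\Delta_i$ ($i=1,\dots,r-1$) such that $(C_1,\dots,C_{k-1},A)$ is a $k$-complex ordered chain is at most $2\binom{|E|}{k-1}$.
   Context: Colors are $\{1,\dots,r\}$. Put $p=\frac{r-1}{r}\cdot\frac{\ln(n/\ln n)}{n}$. Partition $[0,1)$ into consecutive half-open intervals $\Delta_1,\delta_1,\Delta_2,\dots,\delta_{r-1},\Delta_r$ (left to right), $\Delta_i=\big[(i-1)(\tfrac{1-p}{r}+\tfrac{p}{r-1}),\ i\tfrac{1-p}{r}+(i-1)\tfrac{p}{r-1}\big)$, $\delta_i=\big[i\tfrac{1-p}{r}+(i-1)\tfrac{p}{r-1},\ i(\tfrac{1-p}{r}+\tfrac{p}{r-1})\big)$. For injective $\sigma:V\to[0,1)$, a vertex $v$ belongs to interval $I$ if $\sigma(v)\in I$ (and $\Delta_i$ also denotes the set of vertices belonging to it); the first (last) vertex of a vertex set is its vertex of smallest (largest) weight. Algorithm 1: every vertex in $\Delta_i$ gets color $i$; then vertices in $\bigcup_i\delta_i$ are processed in increasing weight order, and $v\in\delta_i$ gets color $i$ unless some edge containing $v$ has all its other vertices already colored $i$, in which case $v$ gets color $i+1$; the result is $C^0$. For $1\le k\le r$, a sequence $(C_1,\dots,C_{k-1},D)$ with $C_j$ edges and $D$ a nonempty vertex set satisfies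 the ordered $k$-chain conditions for color $r$ if: (a) the first vertex of $C_1$ (of $D$ if $k=1$) lies in $\Delta_{r-k+1}$; (b) for each $j=1,\dots,k-1$, with $C_k:=D$, the last vertex of $C_j$ equals the first vertex of $C_{j+1}$, lies in $\delta_{r-k+j}$, and all other vertices of $C_j$ have color $r-k+j$ in $C^0$; (c) all vertices of $D$ have color $r$ in $C^0$. Given sets $V_i\subseteq\Delta_i$, $i=1,\dots,r-1$, and $k\ge2$, a sequence $(C_1,\dots,C_{k-1},A)$ of edges is a $k$-complex ordered chain if, with $A'=A\cap(\delta_{r-1}\cup\Delta_r)$ (vertices of $A$ belonging to $\delta_{r-1}\cup\Delta_r$): (1) $(C_1,\dots,C_{k-1},A')$ satisfies the ordered $k$-chain conditions for color $r$; (2) every vertex of $A\setminus A'$ lies in $\bigcup_{i=1}^{r-1}V_i$; (3) for $j=1,\dots,k-2$, every vertex of $A\cap C_j$ lies in $V_{r-k+j}$; (4) every vertex of $(A\setminus A')\cap C_{k-1}$ lies in $V_{r-1}$. *)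

theory Defs
  imports Main Complex_Main
begin

definition pval :: "nat \<Rightarrow> nat \<Rightarrow> real" where
  "pval n r = (real r - 1) / real r * ln (real n / ln (real n)) / real n"

definition DeltaI :: "nat \<Rightarrow> nat \<Rightarrow> nat \<Rightarrow> real set" where
  "DeltaI n r i = (let p = pval n r in
     {(real i - 1) * ((1 - p) / real r + p / (real r - 1)) ..<
      real i * (1 - p) / real r + (real i - 1) * p / (real r - 1)})"

definition deltaI :: "nat \<Rightarrow> nat \<Rightarrow> nat \<Rightarrow> real set" where
  "deltaI n r i = (let p = pval n r in
     {real i * (1 - p) / real r + (real i - 1) * p / (real r - 1) ..<
      real i * ((1 - p) / real r + p / (real r - 1))})"

text \<open>A vertex u is already coloured when v is processed: u lies in some Delta_j
  (these are coloured first) or u has smaller weight than v.\<close>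
definition alg1_rule ::
  "'a set \<Rightarrow> 'a set set \<Rightarrow> ('a \<Rightarrow> real) \<Rightarrow> nat \<Rightarrow> nat \<Rightarrow> ('a \<Rightarrow> nat) \<Rightarrow> bool" where
  "alg1_rule V E \<sigma> n r c \<longleftrightarrow>
     (\<forall>v. v \<notin> V \<longrightarrow> c v = 0) \<and>
     (\<forall>v\<in>V. \<forall>i\<in>{1..r}. \<sigma> v \<in> DeltaI n r i \<longrightarrow> c v = i) \<and>
     (\<forall>v\<in>V. \<forall>i\<in>{1..r-1}. \<sigma> v \<in> deltaI n r i \<longrightarrow>
        c v = (if (\<exists>e\<in>E. v \<in> e \<and>
                     (\<forall>u\<in>e - {v}. ((\<exists>j\<in>{1..r}. \<sigma> u \<in> DeltaI n r j) \<or> \<sigma> u < \<sigma> v)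
                                   \<and> c u = i))
               then i + 1 else i))"

definition C0 :: "'a set \<Rightarrow> 'a set set \<Rightarrow> ('a \<Rightarrow> real) \<Rightarrow> nat \<Rightarrow> nat \<Rightarrow> 'a \<Rightarrow> nat" where
  "C0 V E \<sigma> n r = (THE c. alg1_rule V E \<sigma> n r c)"

definition firstv :: "('a \<Rightarrow> real) \<Rightarrow> 'a set \<Rightarrow> 'a" where
  "firstv \<sigma> S = (THE v. v \<in> S \<and> (\<forall>u\<in>S. \<sigma> v \<le> \<sigma> u))"

definition lastv :: "('a \<Rightarrow> real) \<Rightarrow> 'a set \<Rightarrow> 'a" where
  "lastv \<sigma> S = (THE v. v \<in> S \<and> (\<forall>u\<in>S. \<sigma> u \<le> \<sigma> v))"

text \<open>C j for j = 1..k-1 are the edges C_1..C_{k-1}; D is the final vertex set.\<close>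
definition ordered_chain ::
  "'a set \<Rightarrow> 'a set set \<Rightarrow> ('a \<Rightarrow> real) \<Rightarrow> nat \<Rightarrow> nat \<Rightarrow> nat \<Rightarrow> (nat \<Rightarrow> 'a set) \<Rightarrow> 'a set \<Rightarrow> bool" where
  "ordered_chain V E \<sigma> n r k C D \<longleftrightarrow>
     (let C' = (\<lambda>j. if j = k then D else C j); c = C0 V E \<sigma> n r in
       D \<noteq> {} \<and>
       \<sigma> (firstv \<sigma> (C' 1)) \<in> DeltaI n r (r - k + 1) \<and>
       (\<forall>j\<in>{1..k-1}.
          lastv \<sigma> (C' j) = firstv \<sigma> (C' (j + 1)) \<and>
          \<sigma> (lastv \<sigma> (C' j)) \<in> deltaI n r (r - k + j) \<and>
          (\<forall>u \<in> C' j - {lastv \<sigma> (C' j)}. c u = r - k + j)) \<and>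
       (\<forall>u\<in>D. c u = r))"

definition complex_chain ::
  "'a set \<Rightarrow> 'a set set \<Rightarrow> ('a \<Rightarrow> real) \<Rightarrow> nat \<Rightarrow> nat \<Rightarrow> (nat \<Rightarrow> 'a set) \<Rightarrow> nat
     \<Rightarrow> (nat \<Rightarrow> 'a set) \<Rightarrow> 'a set \<Rightarrow> bool" where
  "complex_chain V E \<sigma> n r Vs k C A \<longleftrightarrow>
     (let A' = {v\<in>A. \<sigma> v \<in> deltaI n r (r - 1) \<union> DeltaI n r r} in
       ordered_chain V E \<sigma> n r k C A' \<and>
       (\<forall>v\<in>A - A'. v \<in> (\<Union>i\<in>{1..r-1}. Vs i)) \<and>
       (\<forall>j\<in>{1..k-2}. \<forall>v\<in>A \<inter> C j. v \<in> Vs (r - k + j)) \<and>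
       (\<forall>v\<in>(A - A') \<inter> C (k - 1). v \<in> Vs (r - 1)))"

end

theory Submission
  imports Defs
begin

text \<open>
  In a \<open>k\<close>-complex ordered chain every vertex of \<open>C\<^sub>j\<close> has \<open>C\<^sup>0\<close>-colour \<open>r - k + j\<close> or
  \<open>r - k + j + 1\<close>: all vertices but the last have colour \<open>r - k + j\<close>, and the last one is the first
  vertex of \<open>C\<^sub>j\<^sub>+\<^sub>1\<close> (or of the colour-\<open>r\<close> part \<open>A'\<close> of \<open>A\<close>). Hence the \<open>C\<^sub>j\<close> are pairwise
  distinct, consecutive ones meet and \<open>C\<^sub>i\<close>, \<open>C\<^sub>j\<close> with \<open>j \<ge> i + 2\<close> are disjoint: \<open>(C\<^sub>1, \<dots>, C\<^sub>k\<^sub>-\<^sub>1)\<close>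
  is an induced path in the intersection graph of \<open>E\<close>. Such a path is determined up to reversal by
  its set of members, which gives the bound \<open>2 \<cdot> (|E| choose (k - 1))\<close>.
\<close>

definition induced_path :: "'a set list \<Rightarrow> bool" where
  "induced_path xs \<longleftrightarrow> distinct xs \<and>
     (\<forall>i<length xs. \<forall>j<length xs. xs ! i \<inter> xs ! j \<noteq> {} \<longleftrightarrow> i \<le> Suc j \<and> j \<le> Suc i)"

lemma induced_path_distinct: "induced_path xs \<Longrightarrow> distinct xs"
  unfolding induced_path_def by blast

lemma induced_path_meet_iff:
  "induced_path xs \<Longrightarrow> i < length xs \<Longrightarrow> j < length xs \<Longrightarrow>
     xs ! i \<inter> xs ! j \<noteq> {} \<longleftrightarrow> i \<le> Suc j \<and> j \<le> Suc i"
  unfolding induced_path_def by blast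

lemma induced_path_ConsD:
  assumes "induced_path (x # xs)"
  shows "induced_path xs"
proof -
  have "xs ! i \<inter> xs ! j \<noteq> {} \<longleftrightarrow> i \<le> Suc j \<and> j \<le> Suc i"
    if "i < length xs" "j < length xs" for i j
    using induced_path_meet_iff[OF assms, of "Suc i" "Suc j"] that by simp
  with induced_path_distinct[OF assms] show ?thesis
    unfolding induced_path_def by simp
qed

lemma induced_path_rev:
  assumes "induced_path xs"
  shows "induced_path (rev xs)"
proof -
  have "rev xs ! i \<inter> rev xs ! j \<noteq> {} \<longleftrightarrow> i \<le> Suc j \<and> j \<le> Suc i"
    if "i < length xs" "j < length xs" for i j
    using induced_path_meet_iff[OF assms, of "length xs - Suc i" "length xs - Suc j"] that
    by (auto simp: rev_nth)
  with induced_path_distinct[OF assms] show ?thesis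
    unfolding induced_path_def by simp
qed

lemma induced_path_Cons_meet:
  assumes "induced_path (x # xs)" "w \<in> set xs" "x \<inter> w \<noteq> {}"
  shows "w = hd xs"
proof -
  obtain t where t: "t < length xs" "w = xs ! t"
    using assms(2) by (metis in_set_conv_nth)
  with assms(1,3) have "t = 0"
    using induced_path_meet_iff[OF assms(1), of 0 "Suc t"] by simp
  with t show ?thesis by (simp add: hd_conv_nth)
qed

lemma induced_path_eq_if_hd_eq:
  "induced_path xs \<Longrightarrow> induced_path ys \<Longrightarrow> set xs = set ys \<Longrightarrow> hd xs = hd ys \<Longrightarrow> xs = ys"
proof (induction xs arbitrary: ys)
  case Nil
  then show ?case by simp
next
  case (Cons x xs)
  then obtain ys' where ys: "ys = x # ys'"
    by (cases ys) auto
  have "set xs = set ys'"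
    using Cons.prems(3) induced_path_distinct[OF Cons.prems(1)]
      induced_path_distinct[OF Cons.prems(2)] ys by auto
  moreover have "hd xs = hd ys'"
  proof (cases xs)
    case (Cons y zs)
    then have "x \<inter> y \<noteq> {}"
      using induced_path_meet_iff[OF Cons.prems(1), of 0 1] by simp
    then show ?thesis
      using induced_path_Cons_meet[of x ys' y] Cons.prems(2) ys \<open>set xs = set ys'\<close> Cons by auto
  qed (use \<open>set xs = set ys'\<close> in simp)
  ultimately show ?case
    using Cons.IH[OF induced_path_ConsD[OF Cons.prems(1)]] induced_path_ConsD Cons.prems(2) ys
    by blast
qed

lemma induced_path_hd_ends:
  assumes xs: "induced_path xs" and ys: "induced_path ys" and "set xs = set ys" "xs \<noteq> []"
  shows "hd ys = hd xs \<or> hd ys = last xs"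
proof (rule ccontr)
  \<comment> \<open>An inner member of \<open>xs\<close> meets two different members, the head of \<open>ys\<close> only one.\<close>
  assume not_end: "\<not> ?thesis"
  obtain y ys' where ys_eq: "ys = y # ys'"
    using \<open>set xs = set ys\<close> \<open>xs \<noteq> []\<close> by (cases ys) auto
  obtain a where a: "a < length xs" "y = xs ! a"
    using \<open>set xs = set ys\<close> ys_eq by (metis in_set_conv_nth list.set_intros(1))
  have "a \<noteq> 0" "a \<noteq> length xs - 1"
    using not_end ys_eq a \<open>xs \<noteq> []\<close> by (auto simp: hd_conv_nth last_conv_nth)
  with a have inner: "0 < a" "Suc a < length xs"
    by auto
  have neighbour: "xs ! b = hd ys'" if "b < length xs" "b \<noteq> a" "xs ! b \<inter> xs ! a \<noteq> {}" for b
  proof (rule induced_path_Cons_meet[OF ys[unfolded ys_eq]])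
    show "xs ! b \<in> set ys'"
      using that a \<open>set xs = set ys\<close> ys_eq nth_eq_iff_index_eq[OF induced_path_distinct[OF xs]]
      by (metis nth_mem set_ConsD)
    show "y \<inter> xs ! b \<noteq> {}" using that a by blast
  qed
  have "xs ! (a - 1) = hd ys'"
    using neighbour[of "a - 1"] induced_path_meet_iff[OF xs, of "a - 1" a] a inner by simp
  moreover have "xs ! Suc a = hd ys'"
    using neighbour[of "Suc a"] induced_path_meet_iff[OF xs, of "Suc a" a] a inner by simp
  ultimately have "xs ! (a - 1) = xs ! Suc a"
    by simp
  with inner show False
    using nth_eq_iff_index_eq[OF induced_path_distinct[OF xs], of "a - 1" "Suc a"] by linarith
qed

lemma induced_path_same_set:
  assumes "induced_path xs" "induced_path ys" "set xs = set ys"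
  shows "ys = xs \<or> ys = rev xs"
proof (cases "xs = []")
  case False
  from induced_path_hd_ends[OF assms False] show ?thesis
  proof
    assume "hd ys = hd xs"
    then show ?thesis using induced_path_eq_if_hd_eq[OF assms] by simp
  next
    assume "hd ys = last xs"
    then show ?thesis
      using induced_path_eq_if_hd_eq[OF induced_path_rev[OF assms(1)] assms(2)] assms(3) False
      by (simp add: hd_rev)
  qed
qed (use assms in simp)

lemma card_induced_paths_le:
  assumes "finite E"
  shows "card {xs. length xs = m \<and> set xs \<subseteq> E \<and> induced_path xs} \<le> 2 * (card E choose m)"
proof -
  define S where "S = {xs. length xs = m \<and> set xs \<subseteq> E \<and> induced_path xs}"
  have "finite S"
    unfolding S_def by (rule finite_subset[OF _ finite_lists_length_eq[OF assms, of m]]) auto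
  have "set ` S \<subseteq> {T. T \<subseteq> E \<and> card T = m}"
    by (clarsimp simp: S_def distinct_card induced_path_distinct)
  then have "card (set ` S) \<le> card {T. T \<subseteq> E \<and> card T = m}"
    using assms by (intro card_mono) auto
  then have card_sets: "card (set ` S) \<le> card E choose m"
    by (simp only: n_subsets[OF assms])
  have fibre: "card {xs \<in> S. set xs = T} \<le> 2" if T: "T \<in> set ` S" for T
  proof -
    obtain xs where "xs \<in> S" "T = set xs" using T by blast
    then have "{xs \<in> S. set xs = T} \<subseteq> {xs, rev xs}"
      using induced_path_same_set[of xs] by (auto simp: S_def)
    then have "card {xs \<in> S. set xs = T} \<le> card {xs, rev xs}"
      by (intro card_mono) auto
    also have "\<dots> \<le> 2"
      by (simp add: card_insert_if)
    finally show ?thesis .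
  qed
  have "card S = card (\<Union>T\<in>set ` S. {xs \<in> S. set xs = T})"
    by (rule arg_cong[where f = card]) auto
  also have "\<dots> \<le> (\<Sum>T\<in>set ` S. card {xs \<in> S. set xs = T})"
    using \<open>finite S\<close> by (intro card_UN_le) simp
  also have "\<dots> \<le> (\<Sum>T\<in>set ` S. 2)"
    using fibre by (rule sum_mono)
  also have "\<dots> = 2 * card (set ` S)"
    by simp
  finally show ?thesis
    using card_sets unfolding S_def by linarith
qed

lemma induced_path_if_colour_bands:
  fixes c :: "'a \<Rightarrow> nat"
  assumes band: "\<And>i u. i < length Cs \<Longrightarrow> u \<in> Cs ! i \<Longrightarrow> c u = b + i \<or> c u = b + Suc i"
    and exact: "\<And>i. i < length Cs \<Longrightarrow> \<exists>u\<in>Cs ! i. c u = b + i"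
    and meet: "\<And>i. Suc i < length Cs \<Longrightarrow> Cs ! i \<inter> Cs ! Suc i \<noteq> {}"
  shows "induced_path Cs"
proof -
  have disjoint: "Cs ! i \<inter> Cs ! j = {}" if "j < length Cs" "i + 2 \<le> j" for i j
  proof -
    have "c u = b + i \<or> c u = b + Suc i" "c u = b + j \<or> c u = b + Suc j"
      if "u \<in> Cs ! i" "u \<in> Cs ! j" for u
      using band that \<open>j < length Cs\<close> \<open>i + 2 \<le> j\<close> by auto
    with \<open>i + 2 \<le> j\<close> show ?thesis by fastforce
  qed
  have "Cs ! i \<noteq> Cs ! j" if ij: "i < j" "j < length Cs" for i j
  proof
    assume "Cs ! i = Cs ! j"
    moreover obtain u where "u \<in> Cs ! i" "c u = b + i"
      using exact[of i] ij by auto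
    ultimately show False
      using band[of j u] ij by auto
  qed
  then have "distinct Cs"
    by (metis distinct_conv_nth linorder_neqE_nat)
  moreover have "Cs ! i \<inter> Cs ! j \<noteq> {} \<longleftrightarrow> i \<le> Suc j \<and> j \<le> Suc i"
    if "i < length Cs" "j < length Cs" for i j
  proof -
    consider "i = j" | "j = Suc i" | "i = Suc j" | "i + 2 \<le> j" | "j + 2 \<le> i"
      by linarith
    then show ?thesis
    proof cases
      case 1
      then show ?thesis using exact[of i] that by auto
    next
      case 2
      then show ?thesis using meet[of i] that by auto
    next
      case 3
      then show ?thesis using meet[of j] that by (auto simp: Int_commute)
    next
      case 4
      then show ?thesis using disjoint[of j i] that by auto
    next
      case 5
      then show ?thesis using disjoint[of i j] that by (auto simp: Int_commute)
    qed
  qed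
  ultimately show ?thesis
    unfolding induced_path_def by blast
qed

lemma least_weight_ex1:
  assumes "finite S" "S \<noteq> {}" "inj_on \<sigma> S"
  shows "\<exists>!v. v \<in> S \<and> (\<forall>u\<in>S. \<sigma> v \<le> (\<sigma> u :: real))"
proof -
  have "Min (\<sigma> ` S) \<in> \<sigma> ` S"
    using assms(1,2) by simp
  then obtain v where "v \<in> S" "\<sigma> v = Min (\<sigma> ` S)"
    by auto
  with assms show ?thesis
    by (metis Min_le finite_imageI image_eqI inj_on_eq_iff order_antisym)
qed

lemma
  assumes "finite S" "S \<noteq> {}" "inj_on \<sigma> S"
  shows firstv_mem: "firstv \<sigma> S \<in> S"
    and firstv_le: "u \<in> S \<Longrightarrow> \<sigma> (firstv \<sigma> S) \<le> \<sigma> u"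
  using theI'[OF least_weight_ex1[OF assms]] unfolding firstv_def by blast+

lemma lastv_eq_firstv_uminus: "lastv \<sigma> S = firstv (\<lambda>v. - \<sigma> v) S"
  unfolding lastv_def firstv_def by simp

lemma
  assumes "finite S" "S \<noteq> {}" "inj_on \<sigma> S"
  shows lastv_mem: "lastv \<sigma> S \<in> S"
    and lastv_ge: "u \<in> S \<Longrightarrow> \<sigma> u \<le> \<sigma> (lastv \<sigma> S)"
proof -
  have inj: "inj_on (\<lambda>v. - \<sigma> v) S"
    using assms(3) by (simp add: inj_on_def)
  show "lastv \<sigma> S \<in> S"
    unfolding lastv_eq_firstv_uminus using firstv_mem[OF assms(1,2) inj] .
  show "\<sigma> u \<le> \<sigma> (lastv \<sigma> S)" if "u \<in> S"
    unfolding lastv_eq_firstv_uminus using firstv_le[OF assms(1,2) inj that] by simp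
qed

lemma firstv_neq_lastv:
  assumes "finite S" "2 \<le> card S" "inj_on \<sigma> S"
  shows "firstv \<sigma> S \<noteq> lastv \<sigma> S"
proof
  assume first_eq_last: "firstv \<sigma> S = lastv \<sigma> S"
  have "S \<noteq> {}"
    using assms(2) by auto
  have "u = firstv \<sigma> S" if "u \<in> S" for u
  proof (rule inj_onD[OF assms(3) _ that firstv_mem[OF assms(1) \<open>S \<noteq> {}\<close> assms(3)]])
    show "\<sigma> u = \<sigma> (firstv \<sigma> S)"
      using firstv_le[OF assms(1) \<open>S \<noteq> {}\<close> assms(3) that]
        lastv_ge[OF assms(1) \<open>S \<noteq> {}\<close> assms(3) that] first_eq_last by simp
  qed
  then have "card S \<le> 1"
    using card_le_Suc0_iff_eq[OF assms(1)] by auto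
  with assms(2) show False
    by simp
qed

context
  fixes V :: "'a set" and E :: "'a set set" and \<sigma> :: "'a \<Rightarrow> real" and n r k :: nat
    and C :: "nat \<Rightarrow> 'a set" and D :: "'a set"
  assumes chain: "ordered_chain V E \<sigma> n r k C D"
    and k_le_r: "k \<le> r"
    and edge_finite: "\<And>j. j \<in> {1..k-1} \<Longrightarrow> finite (C j)"
    and edge_card: "\<And>j. j \<in> {1..k-1} \<Longrightarrow> 2 \<le> card (C j)"
    and edge_inj: "\<And>j. j \<in> {1..k-1} \<Longrightarrow> inj_on \<sigma> (C j)"
    and final_finite: "finite D"
    and final_inj: "inj_on \<sigma> D"
begin

lemma
  assumes "j \<in> {1..k-1}"
  shows ordered_chain_link: "lastv \<sigma> (C j) = firstv \<sigma> (if Suc j = k then D else C (Suc j))"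
    and ordered_chain_colour_inner:
      "u \<in> C j \<Longrightarrow> u \<noteq> lastv \<sigma> (C j) \<Longrightarrow> C0 V E \<sigma> n r u = r - k + j"
proof -
  have "j \<noteq> k"
    using assms by auto
  \<comment> \<open>the step condition of \<open>ordered_chain\<close> at \<open>j\<close>\<close>
  with chain[unfolded ordered_chain_def Let_def, THEN conjunct2, THEN conjunct2, THEN conjunct1,
      rule_format, OF assms]
  show "lastv \<sigma> (C j) = firstv \<sigma> (if Suc j = k then D else C (Suc j))"
    "u \<in> C j \<Longrightarrow> u \<noteq> lastv \<sigma> (C j) \<Longrightarrow> C0 V E \<sigma> n r u = r - k + j"
    by auto
qed

lemma
  shows ordered_chain_final_first_mem: "firstv \<sigma> D \<in> D"
    and ordered_chain_final_first_colour: "C0 V E \<sigma> n r (firstv \<sigma> D) = r"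
proof -
  have "D \<noteq> {}"
    using chain unfolding ordered_chain_def Let_def by blast
  then show "firstv \<sigma> D \<in> D"
    using firstv_mem final_finite final_inj by blast
  then show "C0 V E \<sigma> n r (firstv \<sigma> D) = r"
    using chain unfolding ordered_chain_def Let_def by blast
qed

lemma ordered_chain_colour_band:
  assumes j: "j \<in> {1..k-1}" and "u \<in> C j"
  shows "C0 V E \<sigma> n r u = r - k + j \<or> C0 V E \<sigma> n r u = r - k + Suc j"
proof (cases "u = lastv \<sigma> (C j)")
  case False
  with ordered_chain_colour_inner[OF j \<open>u \<in> C j\<close>] show ?thesis by simp
next
  case True
  show ?thesis
  proof (cases "Suc j = k")
    case True
    then show ?thesis
      using \<open>u = lastv \<sigma> (C j)\<close> ordered_chain_link[OF j] ordered_chain_final_first_mem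
        ordered_chain_final_first_colour k_le_r by simp
  next
    case False
    then have j': "Suc j \<in> {1..k-1}"
      using j by auto
    have "u = firstv \<sigma> (C (Suc j))"
      using \<open>u = lastv \<sigma> (C j)\<close> ordered_chain_link[OF j] False by simp
    moreover have "C (Suc j) \<noteq> {}"
      using edge_card[OF j'] by auto
    ultimately show ?thesis
      using ordered_chain_colour_inner[OF j'] firstv_mem[OF edge_finite[OF j'] _ edge_inj[OF j']]
        firstv_neq_lastv[OF edge_finite[OF j'] edge_card[OF j'] edge_inj[OF j']] by simp
  qed
qed

lemma ordered_chain_colour_exact:
  assumes j: "j \<in> {1..k-1}"
  shows "\<exists>u\<in>C j. C0 V E \<sigma> n r u = r - k + j"
proof -
  have "\<not> C j \<subseteq> {lastv \<sigma> (C j)}"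
    using edge_card[OF j] card_mono[of "{lastv \<sigma> (C j)}" "C j"] by auto
  then obtain u where "u \<in> C j" "u \<noteq> lastv \<sigma> (C j)"
    by blast
  with ordered_chain_colour_inner[OF j] show ?thesis by blast
qed

lemma ordered_chain_consecutive_meet:
  assumes "1 \<le> j" "Suc j < k"
  shows "C j \<inter> C (Suc j) \<noteq> {}"
proof -
  have j: "j \<in> {1..k-1}" and j': "Suc j \<in> {1..k-1}"
    using assms by auto
  have "lastv \<sigma> (C j) \<in> C j"
    using lastv_mem[OF edge_finite[OF j] _ edge_inj[OF j]] edge_card[OF j] by force
  moreover have "firstv \<sigma> (C (Suc j)) \<in> C (Suc j)"
    using firstv_mem[OF edge_finite[OF j'] _ edge_inj[OF j']] edge_card[OF j'] by force
  ultimately show ?thesis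
    using ordered_chain_link[OF j] assms(2) by auto
qed

lemma ordered_chain_induced_path: "induced_path (map C [1..<k])"
proof (rule induced_path_if_colour_bands[where c = "C0 V E \<sigma> n r" and b = "r - k + 1"])
  fix i assume "i < length (map C [1..<k])"
  then have i: "Suc i \<in> {1..k-1}" and nth: "map C [1..<k] ! i = C (Suc i)"
    by auto
  show "\<exists>u\<in>map C [1..<k] ! i. C0 V E \<sigma> n r u = r - k + 1 + i"
    using ordered_chain_colour_exact[OF i] nth by simp
  show "C0 V E \<sigma> n r u = r - k + 1 + i \<or> C0 V E \<sigma> n r u = r - k + 1 + Suc i"
    if "u \<in> map C [1..<k] ! i" for u
    using ordered_chain_colour_band[OF i] nth that by simp
next
  fix i assume "Suc i < length (map C [1..<k])"
  then show "map C [1..<k] ! i \<inter> map C [1..<k] ! Suc i \<noteq> {}"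
    using ordered_chain_consecutive_meet[of "Suc i"] by simp
qed

end

lemma complex_chain_induced_path:
  assumes "finite V" "E \<subseteq> Pow V" "\<forall>e\<in>E. card e = n" "2 \<le> n" "A \<in> E" "k \<le> r"
    and "length Cs = k - 1" "set Cs \<subseteq> E" "inj_on \<sigma> V"
    and "complex_chain V E \<sigma> n r Vs k (\<lambda>j. Cs ! (j - 1)) A"
  shows "induced_path Cs"
proof -
  define A' where "A' = {v \<in> A. \<sigma> v \<in> deltaI n r (r - 1) \<union> DeltaI n r r}"
  have "A' \<subseteq> V"
    using assms(2,5) unfolding A'_def by blast
  have edge: "Cs ! (j - 1) \<in> E" if "j \<in> {1..k-1}" for j
    using that assms(7,8) by (auto intro: nth_mem)
  have "induced_path (map (\<lambda>j. Cs ! (j - 1)) [1..<k])"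
  proof (rule ordered_chain_induced_path)
    show "ordered_chain V E \<sigma> n r k (\<lambda>j. Cs ! (j - 1)) A'"
      using assms(10) unfolding complex_chain_def Let_def A'_def by blast
    show "finite A'" "inj_on \<sigma> A'"
      using \<open>A' \<subseteq> V\<close> assms(1,9) finite_subset inj_on_subset by blast+
    fix j assume "j \<in> {1..k-1}"
    with edge assms(1-4,9) show "finite (Cs ! (j - 1))" "2 \<le> card (Cs ! (j - 1))"
      "inj_on \<sigma> (Cs ! (j - 1))"
      by (auto intro: finite_subset inj_on_subset)
  qed (use assms(6) in simp)
  moreover have "map (\<lambda>j. Cs ! (j - 1)) [1..<k] = Cs"
    using assms(7) by (intro nth_equalityI) auto
  ultimately show ?thesis
    by simp
qed

theorem lemma6:
  fixes V :: "'a set" and E :: "'a set set" and n r k :: nat and A :: "'a set"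
  assumes "finite V" and "E \<subseteq> Pow V" and "\<forall>e\<in>E. card e = n"
    and "n \<ge> 2" and "r \<ge> 2" and "A \<in> E" and "2 \<le> k" and "k \<le> r"
  shows "card {Cs :: 'a set list. length Cs = k - 1 \<and> set Cs \<subseteq> E \<and>
            (\<exists>(\<sigma> :: 'a \<Rightarrow> real) (Vs :: nat \<Rightarrow> 'a set).
               inj_on \<sigma> V \<and> \<sigma> ` V \<subseteq> {0..<1} \<and>
               (\<forall>i\<in>{1..r-1}. Vs i \<subseteq> {v\<in>V. \<sigma> v \<in> DeltaI n r i}) \<and>
               complex_chain V E \<sigma> n r Vs k (\<lambda>j. Cs ! (j - 1)) A)}
         \<le> 2 * (card E choose (k - 1))"
proof -
  have "finite E"
    using assms(1,2) by (meson finite_Pow_iff finite_subset)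
  show ?thesis
  proof (rule order_trans[OF card_mono card_induced_paths_le[OF \<open>finite E\<close>]])
    show "finite {xs. length xs = k - 1 \<and> set xs \<subseteq> E \<and> induced_path xs}"
      by (rule finite_subset[OF _ finite_lists_length_eq[OF \<open>finite E\<close>]]) auto
  qed (use complex_chain_induced_path[OF assms(1-4,6,8)] in blast)
qed

end
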